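(* Let $C\ge0$ and $a>0$ be real numbers and let $f\in L^1(\mathbb{R})$ satisfy $|f(\xi)|\le Ce^{-a|\xi|}$ for all $\xi\in\mathbb{R}$. Then for all $\xi\in\mathbb{R}$, $$\left|\exp_2^*[f](\xi)\right|\le Ce^{-a|\xi|}\left(M\!\left(\frac{1+a|\xi|}{2},\,2,\,\frac{C}{\pi a}\right)-1\right),$$ where $M(\alpha,\beta,z)=\sum_{n\ge0}\frac{(\alpha)_n z^n}{(\beta)_n\,n!}$ is Kummer's confluent hypergeometric function and $(\alpha)_n=\alpha(\alpha+1)\cdots(\alpha+n-1)$.
   Context: Convolution is normalized: $f*h(\xi)=\frac1{2\pi}\int_{\mathbb{R}}f(\eta)h(\xi-\eta)\,d\eta$, and $f^{*m}$ is the $m$-fold convolution of $f$ with itself. $\exp_2^*[f]=\sum_{m\ge2}\frac{f^{*m}}{m!}$. *)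

theory Defs
  imports "HOL-Analysis.Analysis"
begin

definition conv :: "(real \<Rightarrow> complex) \<Rightarrow> (real \<Rightarrow> complex) \<Rightarrow> real \<Rightarrow> complex" where
  "conv f h \<xi> = complex_of_real (1 / (2 * pi)) * (LINT \<eta>|lborel. f \<eta> * h (\<xi> - \<eta>))"

fun convpow :: "(real \<Rightarrow> complex) \<Rightarrow> nat \<Rightarrow> real \<Rightarrow> complex" where
  "convpow f 0 = f"
| "convpow f (Suc 0) = f"
| "convpow f (Suc (Suc m)) = conv f (convpow f (Suc m))"

definition exp2conv :: "(real \<Rightarrow> complex) \<Rightarrow> real \<Rightarrow> complex" where
  "exp2conv f \<xi> = (\<Sum>k. convpow f (k + 2) \<xi> / of_nat (fact (k + 2)))"

definition kummerM :: "real \<Rightarrow> real \<Rightarrow> real \<Rightarrow> real" where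
  "kummerM \<alpha> \<beta> z = (\<Sum>n. pochhammer \<alpha> n * z ^ n / (pochhammer \<beta> n * fact n))"

end

theory Submission
  imports Defs
begin

(*
  Write k_n(t) = e^{-|t|} theta_n(|t|), where theta_n are the reverse Bessel
  polynomials (theta_0 = 1, theta_1 = 1 + u, theta_{n+2} = (2n+3) theta_{n+1} + u^2 theta_n).
  The key fact is the convolution inequality (in fact an identity)
      integral e^{-|u - t|} k_n(t) dt  <=  k_{n+1}(u) / (n + 1),
  obtained by splitting the line at 0 and u and integrating the explicit antiderivatives
  of theta_n and of e^{-2t} theta_n.  Rescaling and induction give the pointwise bound
      |f^{*(n+1)}(x)|  <=  C^{n+1} / (n! (2 pi a)^n) * k_n(a x).
  Finally theta_n(u) <= 2^n ((1 + u)/2)_n, so the m-th term of exp_2^*[f] is dominated by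
  C e^{-a|x|} times the (m-1)-st term of Kummer's series M((1 + a|x|)/2, 2, C/(pi a)),
  and summing over m >= 2 gives the theorem.
*)

fun rbessel :: "nat \<Rightarrow> real \<Rightarrow> real" where
  "rbessel 0 u = 1"
| "rbessel (Suc 0) u = 1 + u"
| "rbessel (Suc (Suc n)) u = (2 * real n + 3) * rbessel (Suc n) u + u^2 * rbessel n u"

fun rbessel_deriv :: "nat \<Rightarrow> real \<Rightarrow> real" where
  "rbessel_deriv 0 u = 0"
| "rbessel_deriv (Suc n) u = rbessel (Suc n) u - u * rbessel n u"

lemma rbessel_deriv_rec:
  "rbessel_deriv (Suc (Suc n)) u =
     (2 * real n + 3) * rbessel_deriv (Suc n) u + 2 * u * rbessel n u + u^2 * rbessel_deriv n u"
  by (cases n) (simp_all add: power2_eq_square algebra_simps)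

lemma rbessel_has_derivative: "(rbessel n has_real_derivative rbessel_deriv n u) (at u)"
proof (induction n u rule: rbessel.induct)
  case (3 n u)
  have "((\<lambda>u. (2 * real n + 3) * rbessel (Suc n) u + u^2 * rbessel n u) has_real_derivative
        (2 * real n + 3) * rbessel_deriv (Suc n) u + (2 * u * rbessel n u + u^2 * rbessel_deriv n u)) (at u)"
    using 3 by (auto intro!: derivative_eq_intros simp: power2_eq_square)
  then show ?case
    by (simp add: rbessel_deriv_rec add.assoc del: rbessel_deriv.simps)
qed (auto intro!: derivative_eq_intros)

text \<open>On \<open>u \<ge> 0\<close> all \<open>\<theta>_n\<close> and their derivatives are nonnegative (joint induction,
  since the recurrence for the derivative involves \<open>\<theta>_n\<close> itself).\<close>

lemma rbessel_and_deriv_nonneg: "u \<ge> 0 \<Longrightarrow> 0 \<le> rbessel n u \<and> 0 \<le> rbessel_deriv n u"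
proof (induction n u rule: rbessel.induct)
  case (3 n u)
  then show ?case
    by (simp only: rbessel_deriv_rec rbessel.simps) (auto intro!: add_nonneg_nonneg mult_nonneg_nonneg)
qed auto

lemma rbessel_nonneg: "u \<ge> 0 \<Longrightarrow> 0 \<le> rbessel n u"
  using rbessel_and_deriv_nonneg by blast

lemma rbessel_deriv_nonneg: "u \<ge> 0 \<Longrightarrow> 0 \<le> rbessel_deriv n u"
  using rbessel_and_deriv_nonneg by blast

text \<open>One step of the recurrence costs at most a factor \<open>u + 2n + 1\<close>; this is where
  the nonnegativity of the derivative, i.e. \<open>u \<theta>_(n-1) \<le> \<theta>_n\<close>, is used.\<close>

lemma rbessel_Suc_le: "u \<ge> 0 \<Longrightarrow> rbessel (Suc n) u \<le> (u + 2 * real n + 1) * rbessel n u"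
proof (cases n)
  case (Suc m)
  assume u: "u \<ge> 0"
  have "u * rbessel m u \<le> rbessel (Suc m) u" using rbessel_deriv_nonneg[OF u, of "Suc m"] by simp
  then have "u * (u * rbessel m u) \<le> u * rbessel (Suc m) u" using u by (rule mult_left_mono)
  then show ?thesis using Suc by (simp add: power2_eq_square algebra_simps)
qed simp

lemma rbessel_le_pochhammer: "u \<ge> 0 \<Longrightarrow> rbessel n u \<le> 2 ^ n * pochhammer ((1 + u) / 2) n"
proof (induction n)
  case (Suc n)
  have "rbessel (Suc n) u \<le> (u + 2 * real n + 1) * rbessel n u" by (rule rbessel_Suc_le[OF Suc.prems])
  also have "\<dots> \<le> (u + 2 * real n + 1) * (2 ^ n * pochhammer ((1 + u) / 2) n)"
    using Suc by (intro mult_left_mono) auto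
  also have "\<dots> = 2 ^ Suc n * pochhammer ((1 + u) / 2) (Suc n)"
    by (simp add: pochhammer_Suc field_simps)
  finally show ?case .
qed simp

text \<open>A crude polynomial bound, needed for the decay of \<open>e^(-2t) \<theta>_n(t)\<close>.\<close>

lemma rbessel_le_power: "u \<ge> 0 \<Longrightarrow> rbessel n u \<le> (u + 2 * real n + 1) ^ n"
proof (induction n)
  case (Suc n)
  have "rbessel (Suc n) u \<le> (u + 2 * real n + 1) * rbessel n u" by (rule rbessel_Suc_le[OF Suc.prems])
  also have "\<dots> \<le> (u + 2 * real n + 1) ^ Suc n"
    using Suc by (simp add: mult_left_mono)
  also have "\<dots> \<le> (u + 2 * real (Suc n) + 1) ^ Suc n"
    using Suc.prems by (intro power_mono) auto
  finally show ?case .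
qed simp

lemma rbessel_mono:
  assumes "0 \<le> s" and "s \<le> t"
  shows "rbessel n s \<le> rbessel n t"
  by (rule DERIV_nonneg_imp_nondecreasing[OF assms(2)])
    (meson assms(1) order_trans rbessel_has_derivative rbessel_deriv_nonneg)

lemma rbessel_continuous: "continuous_on UNIV (rbessel n)"
  using rbessel_has_derivative by (intro continuous_at_imp_continuous_on) (auto intro: DERIV_isCont)

lemma rbessel_measurable [measurable]: "rbessel n \<in> borel_measurable borel"
  using rbessel_continuous by (rule borel_measurable_continuous_onI)

text \<open>The identity \<open>\<theta>'_(n+1) + t \<theta>'_n = (2n + 1) \<theta>_n\<close>, which makes the two
  antiderivatives below work.\<close>

lemma rbessel_deriv_Suc_plus: "rbessel_deriv (Suc n) t + t * rbessel_deriv n t = (2 * real n + 1) * rbessel n t"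
  by (cases n) (simp_all add: power2_eq_square algebra_simps)

lemma rbessel_deriv_Suc_has_derivative:
  "(rbessel_deriv (Suc n) has_real_derivative
     rbessel_deriv (Suc n) t - (rbessel n t + t * rbessel_deriv n t)) (at t)"
proof -
  have "rbessel_deriv (Suc n) = (\<lambda>t. rbessel (Suc n) t - t * rbessel n t)" by auto
  then show ?thesis
    by (simp del: rbessel_deriv.simps) (auto intro!: derivative_eq_intros rbessel_has_derivative)
qed

lemma exp_rbessel_antiderivative:
  "((\<lambda>t. - exp (-2 * t) * rbessel_deriv (Suc n) t)
     has_real_derivative 2 * (real n + 1) * (exp (-2 * t) * rbessel n t)) (at t)"
proof -
  have "((\<lambda>t. - exp (-2 * t) * rbessel_deriv (Suc n) t) has_real_derivative
      exp (-2 * t) * (rbessel_deriv (Suc n) t + (rbessel n t + t * rbessel_deriv n t))) (at t)"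
    by (auto intro!: derivative_eq_intros rbessel_deriv_Suc_has_derivative
        simp del: rbessel_deriv.simps simp: algebra_simps)
  then show ?thesis
    using rbessel_deriv_Suc_plus[of n t] by (simp add: algebra_simps del: rbessel_deriv.simps)
qed

lemma rbessel_antiderivative:
  "((\<lambda>t. rbessel (Suc n) t + t * rbessel n t) has_real_derivative 2 * (real n + 1) * rbessel n t) (at t)"
proof -
  have "((\<lambda>t. rbessel (Suc n) t + t * rbessel n t) has_real_derivative
     rbessel_deriv (Suc n) t + (rbessel n t + t * rbessel_deriv n t)) (at t)"
    by (auto intro!: derivative_eq_intros rbessel_has_derivative)
  then show ?thesis
    using rbessel_deriv_Suc_plus[of n t] by (simp add: algebra_simps del: rbessel_deriv.simps)
qed

text \<open>The antiderivative of \<open>e^(-2t) \<theta>_n(t)\<close> vanishes at infinity, because a polynomial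
  is beaten by the exponential.\<close>

lemma exp_rbessel_deriv_tendsto_0: "((\<lambda>t. exp (-2 * t) * rbessel_deriv (Suc n) t) \<longlongrightarrow> 0) at_top"
proof (rule tendsto_sandwich[where f = "\<lambda>_. 0" and h = "\<lambda>t. 2 ^ Suc n * (t ^ Suc n / exp t)"])
  define K where "K = 2 * real (Suc n) + 1"
  show "\<forall>\<^sub>F t in at_top. 0 \<le> exp (-2 * t) * rbessel_deriv (Suc n) t"
    using eventually_ge_at_top[of 0] by eventually_elim (simp add: rbessel_deriv_nonneg del: rbessel_deriv.simps)
  show "\<forall>\<^sub>F t in at_top. exp (-2 * t) * rbessel_deriv (Suc n) t \<le> 2 ^ Suc n * (t ^ Suc n / exp t)"
    using eventually_ge_at_top[of K]
  proof eventually_elim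
    case (elim t)
    then have t: "t \<ge> 0" unfolding K_def by linarith
    have "rbessel_deriv (Suc n) t \<le> rbessel (Suc n) t"
      using rbessel_nonneg[OF t, of n] t by simp
    also have "\<dots> \<le> (t + K) ^ Suc n"
      using rbessel_le_power[OF t, of "Suc n"] by (simp add: K_def add.assoc)
    also have "\<dots> \<le> (2 * t) ^ Suc n"
      using elim K_def by (intro power_mono) auto
    also have "\<dots> = 2 ^ Suc n * t ^ Suc n"
      by (rule power_mult_distrib)
    finally have "rbessel_deriv (Suc n) t \<le> 2 ^ Suc n * t ^ Suc n" .
    moreover have "exp (-2 * t) \<le> 1 / exp t"
      using t by (simp add: exp_minus divide_inverse)
    ultimately have "exp (-2 * t) * rbessel_deriv (Suc n) t \<le> 1 / exp t * (2 ^ Suc n * t ^ Suc n)"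
      using t by (intro mult_mono) (auto simp: rbessel_deriv_nonneg simp del: rbessel_deriv.simps)
    then show ?case by simp
  qed
  show "((\<lambda>t. 2 ^ Suc n * (t ^ Suc n / exp t)) \<longlongrightarrow> (0::real)) at_top"
    by (intro tendsto_mult_right_zero tendsto_power_div_exp_0)
qed simp

lemma tail_integral:
  assumes c: "c \<ge> 0" and K: "K \<ge> 0"
  shows "(\<integral>\<^sup>+t. ennreal (K * (exp (-2 * t) * rbessel n t)) * indicator {c..} t \<partial>lborel)
       = ennreal (K * (exp (-2 * c) * rbessel_deriv (Suc n) c) / (2 * (real n + 1)))"
proof -
  define F where "F t = K * (- exp (-2 * t) * rbessel_deriv (Suc n) t) / (2 * (real n + 1))" for t
  have "DERIV F t :> K * (2 * (real n + 1) * (exp (-2 * t) * rbessel n t)) / (2 * (real n + 1))" for t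
    unfolding F_def by (intro DERIV_cdivide DERIV_cmult exp_rbessel_antiderivative)
  then have "DERIV F t :> K * (exp (-2 * t) * rbessel n t)" for t
    by simp
  moreover have "F = (\<lambda>t. - K / (2 * (real n + 1)) * (exp (-2 * t) * rbessel_deriv (Suc n) t))"
    by (auto simp: F_def field_simps simp del: rbessel_deriv.simps)
  then have "(F \<longlongrightarrow> 0) at_top"
    by (simp only: tendsto_mult_right_zero exp_rbessel_deriv_tendsto_0)
  moreover have "0 \<le> K * (exp (-2 * t) * rbessel n t)" if "c \<le> t" for t
    using that c K rbessel_nonneg[of t n] by simp
  ultimately have "(\<integral>\<^sup>+t. ennreal (K * (exp (-2 * t) * rbessel n t)) * indicator {c..} t \<partial>lborel)
      = ennreal (0 - F c)"
    by (intro nn_integral_FTC_atLeast) auto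
  then show ?thesis by (simp add: F_def del: rbessel_deriv.simps)
qed

lemma head_integral:
  assumes u: "u \<ge> 0" and K: "K \<ge> 0"
  shows "(\<integral>\<^sup>+t. ennreal (K * rbessel n t) * indicator {0..u} t \<partial>lborel)
       = ennreal (K * (rbessel (Suc n) u + u * rbessel n u - rbessel (Suc n) 0) / (2 * (real n + 1)))"
proof -
  define F where "F t = K * (rbessel (Suc n) t + t * rbessel n t) / (2 * (real n + 1))" for t
  have "DERIV F t :> K * (2 * (real n + 1) * rbessel n t) / (2 * (real n + 1))" for t
    unfolding F_def by (intro DERIV_cdivide DERIV_cmult rbessel_antiderivative)
  then have "DERIV F t :> K * rbessel n t" for t
    by simp
  moreover have "0 \<le> K * rbessel n t" if "t \<in> {0..u}" for t
    using that K rbessel_nonneg[of t n] by simp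
  ultimately have "(\<integral>\<^sup>+t. ennreal (K * rbessel n t) * indicator {0..u} t \<partial>lborel) = ennreal (F u - F 0)"
    using u by (intro nn_integral_FTC_Icc) auto
  then show ?thesis by (simp add: F_def diff_divide_distrib right_diff_distrib del: rbessel.simps)
qed

text \<open>The kernel \<open>k_n(t) = e^(-|t|) \<theta>_n(|t|)\<close>: \<open>k_0\<close> is the bound on \<open>f\<close>, and \<open>k_n\<close> bounds
  the \<open>(n + 1)\<close>-fold convolution power.\<close>

definition bessel_kernel :: "nat \<Rightarrow> real \<Rightarrow> real" where
  "bessel_kernel n t = exp (- \<bar>t\<bar>) * rbessel n \<bar>t\<bar>"

lemma bessel_kernel_nonneg: "0 \<le> bessel_kernel n t"
  by (simp add: bessel_kernel_def rbessel_nonneg)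

lemma bessel_kernel_even: "bessel_kernel n (- t) = bessel_kernel n t"
  by (simp add: bessel_kernel_def)

lemma bessel_kernel_measurable [measurable]: "bessel_kernel n \<in> borel_measurable borel"
  unfolding bessel_kernel_def by measurable

lemma nn_integral_lborel_reflect:
  fixes f :: "real \<Rightarrow> ennreal"
  shows "f \<in> borel_measurable borel \<Longrightarrow> (\<integral>\<^sup>+x. f x \<partial>lborel) = (\<integral>\<^sup>+x. f (- x) \<partial>lborel)"
  using nn_integral_real_affine[of f "-1" 0] by simp

text \<open>For \<open>u \<ge> 0\<close>, the convolution integral of \<open>e^(-|t|)\<close> against \<open>k_n\<close> over the three
  pieces \<open>[u, \<infinity>)\<close>, \<open>[0, u]\<close> and \<open>(-\<infinity>, 0]\<close>; on each piece the integrand is an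
  exponential times \<open>\<theta>_n\<close> or \<open>e^(-2t) \<theta>_n\<close>.\<close>

lemma kernel_integral_right:
  assumes u: "u \<ge> 0"
  shows "(\<integral>\<^sup>+t. ennreal (exp (- \<bar>u - t\<bar>) * bessel_kernel n t) * indicator {u..} t \<partial>lborel)
       = ennreal (exp (- u) * rbessel_deriv (Suc n) u / (2 * (real n + 1)))"
proof -
  have "ennreal (exp (- \<bar>u - t\<bar>) * bessel_kernel n t) * indicator {u..} t
      = ennreal (exp u * (exp (-2 * t) * rbessel n t)) * indicator {u..} t" for t
  proof -
    have "exp (u - t) * exp (- t) = exp u * exp (-2 * t)" by (simp add: mult_exp_exp)
    then show ?thesis
      using u by (auto simp: bessel_kernel_def mult.assoc[symmetric] split: split_indicator)
  qed
  then have "(\<integral>\<^sup>+t. ennreal (exp (- \<bar>u - t\<bar>) * bessel_kernel n t) * indicator {u..} t \<partial>lborel)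
      = ennreal (exp u * (exp (-2 * u) * rbessel_deriv (Suc n) u) / (2 * (real n + 1)))"
    using tail_integral[OF u, of "exp u" n] by simp
  moreover have "exp u * (exp (-2 * u) * rbessel_deriv (Suc n) u) = exp (- u) * rbessel_deriv (Suc n) u"
    by (simp add: mult.assoc[symmetric] mult_exp_exp del: rbessel_deriv.simps)
  ultimately show ?thesis by (simp only:)
qed

lemma kernel_integral_middle:
  assumes u: "u \<ge> 0"
  shows "(\<integral>\<^sup>+t. ennreal (exp (- \<bar>u - t\<bar>) * bessel_kernel n t) * indicator {0..u} t \<partial>lborel)
       = ennreal (exp (- u) * (rbessel (Suc n) u + u * rbessel n u - rbessel (Suc n) 0) / (2 * (real n + 1)))"
proof -
  have "ennreal (exp (- \<bar>u - t\<bar>) * bessel_kernel n t) * indicator {0..u} t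
      = ennreal (exp (- u) * rbessel n t) * indicator {0..u} t" for t
  proof -
    have "exp (t - u) * exp (- t) = exp (- u)" by (simp add: mult_exp_exp)
    then show ?thesis by (auto simp: bessel_kernel_def mult.assoc[symmetric] split: split_indicator)
  qed
  then show ?thesis
    using head_integral[OF u, of "exp (- u)" n] by (simp del: rbessel.simps)
qed

lemma kernel_integral_left:
  assumes u: "u \<ge> 0"
  shows "(\<integral>\<^sup>+t. ennreal (exp (- \<bar>u - t\<bar>) * bessel_kernel n t) * indicator {..0} t \<partial>lborel)
       = ennreal (exp (- u) * rbessel (Suc n) 0 / (2 * (real n + 1)))"
proof -
  have "(\<integral>\<^sup>+t. ennreal (exp (- \<bar>u - t\<bar>) * bessel_kernel n t) * indicator {..0} t \<partial>lborel)
      = (\<integral>\<^sup>+t. ennreal (exp (- \<bar>u + t\<bar>) * bessel_kernel n t) * indicator {0..} t \<partial>lborel)"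
    by (subst nn_integral_lborel_reflect) (auto simp: bessel_kernel_even indicator_def)
  also have "\<dots> = (\<integral>\<^sup>+t. ennreal (exp (- u) * (exp (-2 * t) * rbessel n t)) * indicator {0..} t \<partial>lborel)"
  proof -
    have "exp (- u - t) * exp (- t) = exp (- u) * exp (-2 * t)" for t by (simp add: mult_exp_exp)
    then show ?thesis
      using u by (intro nn_integral_cong) (auto simp: bessel_kernel_def mult.assoc[symmetric] split: split_indicator)
  qed
  also have "\<dots> = ennreal (exp (- u) * rbessel (Suc n) 0 / (2 * (real n + 1)))"
    by (subst tail_integral) auto
  finally show ?thesis .
qed

text \<open>The central convolution inequality \<open>e^(-|\<cdot>|) * k_n \<le> k_(n+1) / (n + 1)\<close> (unnormalized
  convolution), first for \<open>u \<ge> 0\<close>: the three pieces add up to exactly \<open>k_(n+1)(u)/(n+1)\<close>.\<close>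

lemma kernel_convolution_nonneg:
  assumes u: "u \<ge> 0"
  shows "(\<integral>\<^sup>+t. ennreal (exp (- \<bar>u - t\<bar>) * bessel_kernel n t) \<partial>lborel)
       \<le> ennreal (bessel_kernel (Suc n) u / (real n + 1))"
proof -
  define W where "W t = ennreal (exp (- \<bar>u - t\<bar>) * bessel_kernel n t)" for t
  define N where "N = 2 * (real n + 1)"
  have [measurable]: "W \<in> borel_measurable borel" unfolding W_def by measurable
  have "(\<integral>\<^sup>+t. W t \<partial>lborel)
      \<le> (\<integral>\<^sup>+t. W t * indicator {u..} t + W t * indicator {0..u} t + W t * indicator {..0} t \<partial>lborel)"
    by (intro nn_integral_mono) (auto split: split_indicator)
  also have "\<dots> = (\<integral>\<^sup>+t. W t * indicator {u..} t \<partial>lborel) + (\<integral>\<^sup>+t. W t * indicator {0..u} t \<partial>lborel)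
      + (\<integral>\<^sup>+t. W t * indicator {..0} t \<partial>lborel)"
    by (simp add: nn_integral_add)
  also have "\<dots> = ennreal (exp (- u) * rbessel_deriv (Suc n) u / N)
      + ennreal (exp (- u) * (rbessel (Suc n) u + u * rbessel n u - rbessel (Suc n) 0) / N)
      + ennreal (exp (- u) * rbessel (Suc n) 0 / N)"
    unfolding W_def N_def
    by (simp only: kernel_integral_right[OF u] kernel_integral_middle[OF u] kernel_integral_left[OF u])
  also have "\<dots> = ennreal (exp (- u) * rbessel_deriv (Suc n) u / N
      + exp (- u) * (rbessel (Suc n) u + u * rbessel n u - rbessel (Suc n) 0) / N
      + exp (- u) * rbessel (Suc n) 0 / N)"
  proof -
    have "0 \<le> exp (- u) * rbessel_deriv (Suc n) u / N"
      using rbessel_deriv_nonneg[OF u, of "Suc n"] by (simp add: N_def del: rbessel_deriv.simps)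
    moreover have "0 \<le> exp (- u) * (rbessel (Suc n) u + u * rbessel n u - rbessel (Suc n) 0) / N"
      using u rbessel_mono[OF order_refl u, of "Suc n"] mult_nonneg_nonneg[OF u rbessel_nonneg[OF u, of n]]
      by (intro divide_nonneg_nonneg mult_nonneg_nonneg) (simp_all add: N_def del: rbessel.simps)
    moreover have "0 \<le> exp (- u) * rbessel (Suc n) 0 / N"
      using rbessel_nonneg[of 0 "Suc n"] by (simp add: N_def del: rbessel.simps)
    ultimately show ?thesis by (simp only: ennreal_plus add_nonneg_nonneg)
  qed
  also have "\<dots> = ennreal (bessel_kernel (Suc n) u / (real n + 1))"
  proof -
    define A P Q Z where "A = exp (- u)" and "P = rbessel (Suc n) u" and "Q = u * rbessel n u"
      and "Z = rbessel (Suc n) 0"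
    have "A * (P - Q) / N + A * (P + Q - Z) / N + A * Z / N = (A * (P - Q) + A * (P + Q - Z) + A * Z) / N"
      by (simp add: add_divide_distrib)
    also have "\<dots> = 2 * (A * P) / (2 * (real n + 1))"
      by (simp add: N_def algebra_simps)
    also have "\<dots> = A * P / (real n + 1)"
      by (rule mult_divide_mult_cancel_left) simp
    finally show ?thesis
      using u by (simp add: A_def P_def Q_def Z_def bessel_kernel_def del: rbessel.simps)
  qed
  finally show ?thesis unfolding W_def .
qed

text \<open>Both sides are even in \<open>u\<close>, so the inequality holds for all \<open>u\<close>.\<close>

lemma kernel_convolution:
  "(\<integral>\<^sup>+t. ennreal (exp (- \<bar>u - t\<bar>) * bessel_kernel n t) \<partial>lborel)
     \<le> ennreal (bessel_kernel (Suc n) u / (real n + 1))"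
proof (cases "u \<ge> 0")
  case False
  have "(\<integral>\<^sup>+t. ennreal (exp (- \<bar>u - t\<bar>) * bessel_kernel n t) \<partial>lborel)
      = (\<integral>\<^sup>+t. ennreal (exp (- \<bar>- u - t\<bar>) * bessel_kernel n t) \<partial>lborel)"
    by (subst nn_integral_lborel_reflect) (simp_all add: bessel_kernel_even abs_minus_commute add.commute)
  also have "\<dots> \<le> ennreal (bessel_kernel (Suc n) (- u) / (real n + 1))"
    using False by (intro kernel_convolution_nonneg) simp
  finally show ?thesis by (simp add: bessel_kernel_even)
qed (rule kernel_convolution_nonneg)

text \<open>The same inequality for the rescaled kernels \<open>k_n(a \<cdot>)\<close>, by the substitution
  \<open>t = a (x - y)\<close>.\<close>

lemma scaled_kernel_convolution:
  assumes a: "a > 0"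
  shows "(\<integral>\<^sup>+y. ennreal (exp (- a * \<bar>y\<bar>) * bessel_kernel n (a * (x - y))) \<partial>lborel)
       \<le> ennreal (bessel_kernel (Suc n) (a * x) / ((real n + 1) * a))"
proof -
  have "(\<integral>\<^sup>+y. ennreal (exp (- a * \<bar>y\<bar>) * bessel_kernel n (a * (x - y))) \<partial>lborel)
      = ennreal (1 / a) * (\<integral>\<^sup>+t. ennreal (exp (- \<bar>a * x - t\<bar>) * bessel_kernel n t) \<partial>lborel)"
  proof -
    have "exp (- a * \<bar>x + - 1 / a * t\<bar>) = exp (- \<bar>a * x - t\<bar>)" for t
      using a by (simp add: abs_mult[symmetric] field_simps)
    then show ?thesis
      using a nn_integral_real_affine[of "\<lambda>y. ennreal (exp (- a * \<bar>y\<bar>) * bessel_kernel n (a * (x - y)))"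
          "- 1 / a" x]
      by simp
  qed
  also have "\<dots> \<le> ennreal (1 / a) * ennreal (bessel_kernel (Suc n) (a * x) / (real n + 1))"
    by (intro mult_left_mono kernel_convolution) simp
  also have "\<dots> = ennreal (bessel_kernel (Suc n) (a * x) / ((real n + 1) * a))"
    using a by (simp add: ennreal_mult''[symmetric] bessel_kernel_nonneg)
  finally show ?thesis .
qed

text \<open>A Bochner integral is bounded by any bound on the nonnegative integral of a
  pointwise majorant of its norm; no integrability needs to be checked, since a
  non-integrable function has integral \<open>0\<close>.\<close>

lemma norm_integral_le_nn_integral_bound:
  fixes F :: "'a \<Rightarrow> 'b::{banach, second_countable_topology}"
  assumes bound: "\<And>y. norm (F y) \<le> g y"
    and nn: "(\<integral>\<^sup>+y. ennreal (g y) \<partial>M) \<le> ennreal V" and V: "0 \<le> V"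
  shows "norm (integral\<^sup>L M F) \<le> V"
proof (cases "integrable M F")
  case True
  have "ennreal (norm (integral\<^sup>L M F)) \<le> (\<integral>\<^sup>+y. ennreal (norm (F y)) \<partial>M)"
    using True by (rule integral_norm_bound_ennreal)
  also have "\<dots> \<le> (\<integral>\<^sup>+y. ennreal (g y) \<partial>M)"
    by (intro nn_integral_mono ennreal_leI bound)
  also have "\<dots> \<le> ennreal V" by (rule nn)
  finally show ?thesis using V by (simp add: ennreal_le_iff)
next
  case False
  then show ?thesis using V by (simp add: not_integrable_integral_eq)
qed

lemma conv_bound_step:
  fixes f h :: "real \<Rightarrow> complex"
  assumes a: "a > 0" and C: "C \<ge> 0" and K: "K \<ge> 0"
    and hf: "\<And>y. norm (f y) \<le> C * exp (- a * \<bar>y\<bar>)"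
    and hh: "\<And>y. norm (h y) \<le> K * bessel_kernel n (a * y)"
  shows "norm (conv f h x) \<le> C * K / (2 * pi) * (bessel_kernel (Suc n) (a * x) / ((real n + 1) * a))"
proof -
  define G where "G y = exp (- a * \<bar>y\<bar>) * bessel_kernel n (a * (x - y))" for y
  define V where "V = bessel_kernel (Suc n) (a * x) / ((real n + 1) * a)"
  have V: "0 \<le> V" unfolding V_def using a by (simp add: bessel_kernel_nonneg)
  have "norm (f y * h (x - y)) \<le> C * K * G y" for y
  proof -
    have "norm (f y * h (x - y)) \<le> (C * exp (- a * \<bar>y\<bar>)) * (K * bessel_kernel n (a * (x - y)))"
      unfolding norm_mult using C by (intro mult_mono hf hh) auto
    then show ?thesis by (simp add: G_def mult_ac)
  qed
  moreover have "(\<integral>\<^sup>+y. ennreal (C * K * G y) \<partial>lborel) \<le> ennreal (C * K * V)"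
  proof -
    have "(\<integral>\<^sup>+y. ennreal (C * K * G y) \<partial>lborel) = ennreal (C * K) * (\<integral>\<^sup>+y. ennreal (G y) \<partial>lborel)"
    proof -
      have "ennreal (C * K * G y) = ennreal (C * K) * ennreal (G y)" for y
        using C K a by (intro ennreal_mult) (auto simp: G_def bessel_kernel_nonneg)
      then show ?thesis by (simp add: nn_integral_cmult G_def)
    qed
    also have "\<dots> \<le> ennreal (C * K) * ennreal V"
      unfolding G_def V_def by (intro mult_left_mono scaled_kernel_convolution a) simp
    also have "\<dots> = ennreal (C * K * V)"
      using C K V by (intro ennreal_mult[symmetric]) auto
    finally show ?thesis .
  qed
  ultimately have "norm (LINT y|lborel. f y * h (x - y)) \<le> C * K * V"
    using C K V by (intro norm_integral_le_nn_integral_bound) auto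
  then have "1 / (2 * pi) * norm (LINT y|lborel. f y * h (x - y)) \<le> 1 / (2 * pi) * (C * K * V)"
    by (intro mult_left_mono) auto
  then show ?thesis by (simp add: conv_def norm_mult norm_divide V_def)
qed

lemma convpow_bound:
  fixes f :: "real \<Rightarrow> complex"
  assumes a: "a > 0" and C: "C \<ge> 0" and hf: "\<And>y. norm (f y) \<le> C * exp (- a * \<bar>y\<bar>)"
  shows "norm (convpow f (Suc n) x) \<le> C ^ Suc n / (fact n * (2 * pi * a) ^ n) * bessel_kernel n (a * x)"
proof (induction n arbitrary: x)
  case 0
  then show ?case using hf a by (simp add: bessel_kernel_def abs_mult)
next
  case (Suc n)
  define K where "K = C ^ Suc n / (fact n * (2 * pi * a) ^ n)"
  have "norm (convpow f (Suc (Suc n)) x) = norm (conv f (convpow f (Suc n)) x)" by simp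
  also have "\<dots> \<le> C * K / (2 * pi) * (bessel_kernel (Suc n) (a * x) / ((real n + 1) * a))"
    using a C Suc.IH by (intro conv_bound_step hf) (auto simp: K_def)
  also have "\<dots> = C ^ Suc (Suc n) / (fact (Suc n) * (2 * pi * a) ^ Suc n) * bessel_kernel (Suc n) (a * x)"
    using a by (simp add: K_def field_simps)
  finally show ?case .
qed

definition kummer_term :: "real \<Rightarrow> real \<Rightarrow> real \<Rightarrow> nat \<Rightarrow> real" where
  "kummer_term \<alpha> \<beta> z n = pochhammer \<alpha> n * z ^ n / (pochhammer \<beta> n * fact n)"

lemma kummerM_eq_suminf: "kummerM \<alpha> \<beta> z = (\<Sum>n. kummer_term \<alpha> \<beta> z n)"
  by (simp add: kummerM_def kummer_term_def)

lemma kummer_term_nonneg: "\<alpha> > 0 \<Longrightarrow> \<beta> > 0 \<Longrightarrow> z \<ge> 0 \<Longrightarrow> 0 \<le> kummer_term \<alpha> \<beta> z n"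
  by (simp add: kummer_term_def pochhammer_pos less_imp_le)

text \<open>For positive parameters and \<open>z \<ge> 0\<close> the series converges by the ratio test:
  the ratio of consecutive terms is \<open>(\<alpha> + m) z / ((\<beta> + m)(m + 1)) \<rightarrow> 0\<close>.\<close>

lemma kummer_summable:
  assumes \<alpha>: "\<alpha> > 0" and \<beta>: "\<beta> > 0" and z: "z \<ge> 0"
  shows "summable (kummer_term \<alpha> \<beta> z)"
proof (rule summable_ratio_test[where c = "1 / 2" and N = "nat \<lceil>\<alpha> + 4 * z\<rceil>"])
  fix m assume m: "m \<ge> nat \<lceil>\<alpha> + 4 * z\<rceil>"
  have ratio: "kummer_term \<alpha> \<beta> z (Suc m)
      = kummer_term \<alpha> \<beta> z m * ((\<alpha> + real m) * z / ((\<beta> + real m) * (real m + 1)))"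
    using \<beta> pochhammer_pos[of \<beta> m] by (simp add: kummer_term_def pochhammer_rec' field_simps)
  have "real m \<ge> \<alpha> + 4 * z" using m by linarith
  then have "\<alpha> * z \<le> real m * z" and "4 * z * real m \<le> real m * real m"
    using \<alpha> z by (intro mult_right_mono; simp)+
  then have "2 * ((\<alpha> + real m) * z) \<le> (\<beta> + real m) * (real m + 1)"
  proof -
    have "2 * ((\<alpha> + real m) * z) \<le> 4 * z * real m"
      using \<open>\<alpha> * z \<le> real m * z\<close> by (simp add: algebra_simps)
    also have "\<dots> \<le> real m * real m" by fact
    also have "\<dots> \<le> (\<beta> + real m) * (real m + 1)"
      using \<beta> by (intro mult_mono) auto
    finally show ?thesis .
  qed
  then have "(\<alpha> + real m) * z / ((\<beta> + real m) * (real m + 1)) \<le> 1 / 2"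
    using \<beta> by (simp add: divide_simps)
  then have "kummer_term \<alpha> \<beta> z (Suc m) \<le> kummer_term \<alpha> \<beta> z m * (1 / 2)"
    unfolding ratio using kummer_term_nonneg[OF \<alpha> \<beta> z] by (intro mult_left_mono)
  then show "norm (kummer_term \<alpha> \<beta> z (Suc m)) \<le> 1 / 2 * norm (kummer_term \<alpha> \<beta> z m)"
    using kummer_term_nonneg[OF \<alpha> \<beta> z] by simp
qed simp

text \<open>The \<open>(k + 2)\<close>-nd term of \<open>exp_2^*[f]\<close> is dominated by the \<open>(k + 1)\<close>-st term of
  Kummer's series \<open>M((1 + a|x|)/2, 2, C/(\<pi>a))\<close>, using \<open>(k + 2)! = (2)_(k+1)\<close>.\<close>

lemma convpow_term_bound:
  fixes f :: "real \<Rightarrow> complex"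
  assumes a: "a > 0" and C: "C \<ge> 0" and hf: "\<And>y. norm (f y) \<le> C * exp (- a * \<bar>y\<bar>)"
  shows "norm (convpow f (k + 2) x / of_nat (fact (k + 2)))
      \<le> C * exp (- a * \<bar>x\<bar>) * kummer_term ((1 + a * \<bar>x\<bar>) / 2) 2 (C / (pi * a)) (Suc k)"
proof -
  define u where "u = a * \<bar>x\<bar>"
  define P where "P = pochhammer ((1 + u) / 2) (Suc k)"
  have u: "u \<ge> 0" unfolding u_def using a by simp
  have "norm (convpow f (Suc (Suc k)) x)
      \<le> C ^ Suc (Suc k) / (fact (Suc k) * (2 * pi * a) ^ Suc k) * bessel_kernel (Suc k) (a * x)"
    by (rule convpow_bound[OF a C hf])
  also have "\<dots> \<le> C ^ Suc (Suc k) / (fact (Suc k) * (2 * pi * a) ^ Suc k) * (exp (- u) * (2 ^ Suc k * P))"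
    using rbessel_le_pochhammer[OF u, of "Suc k"] a C
    by (intro mult_left_mono) (auto simp: bessel_kernel_def u_def P_def abs_mult)
  also have "\<dots> = C * exp (- u) * (P * (C / (pi * a)) ^ Suc k / fact (Suc k))"
  proof -
    have split_power: "(2 * pi * a) ^ Suc k = 2 ^ Suc k * (pi * a) ^ Suc k"
      by (simp only: power_mult_distrib[symmetric] mult.assoc)
    have cancel: "C ^ Suc (Suc k) / (F * (D * Q ^ Suc k)) * (E * (D * P)) = C * E * (P * (C / Q) ^ Suc k / F)"
      if "F \<noteq> 0" "D \<noteq> 0" "Q \<noteq> 0" for F D Q E :: real
      using that by (simp add: field_simps power_divide)
    show ?thesis
      unfolding split_power using a by (intro cancel) auto
  qed
  finally have bound: "norm (convpow f (Suc (Suc k)) x)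
      \<le> C * exp (- u) * (P * (C / (pi * a)) ^ Suc k / fact (Suc k))" .
  have "norm (convpow f (k + 2) x / of_nat (fact (k + 2)))
      = norm (convpow f (Suc (Suc k)) x) / real (fact (Suc (Suc k)))"
    by (simp only: norm_divide norm_of_nat add_2_eq_Suc')
  also have "\<dots> \<le> C * exp (- u) * (P * (C / (pi * a)) ^ Suc k / fact (Suc k)) / real (fact (Suc (Suc k)))"
    by (rule divide_right_mono[OF bound]) simp
  also have "\<dots> = C * exp (- u) * (P * (C / (pi * a)) ^ Suc k / (pochhammer 2 (Suc k) * fact (Suc k)))"
    using pochhammer_rec[of "1::real" "Suc k"] pochhammer_fact[of "Suc (Suc k)", where 'a = real]
    by (simp add: field_simps)
  finally show ?thesis by (simp add: kummer_term_def u_def P_def)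
qed

lemma norm_suminf_le_shifted:
  fixes t :: "nat \<Rightarrow> 'a::banach"
  assumes bound: "\<And>k. norm (t k) \<le> c * T (Suc k)" and T: "summable T"
  shows "norm (suminf t) \<le> c * (suminf T - T 0)"
proof -
  have T': "summable (\<lambda>k. c * T (Suc k))"
    using T by (intro summable_mult) (simp add: summable_Suc_iff)
  have t: "summable (\<lambda>k. norm (t k))"
    by (rule summable_comparison_test[OF _ T']) (use bound in auto)
  have "norm (suminf t) \<le> (\<Sum>k. norm (t k))" by (rule summable_norm[OF t])
  also have "\<dots> \<le> (\<Sum>k. c * T (Suc k))" by (rule suminf_le[OF bound t T'])
  also have "\<dots> = c * (suminf T - T 0)"
    using T by (simp add: suminf_mult summable_Suc_iff suminf_split_head)
  finally show ?thesis .
qed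

theorem mainTheorem8:
  fixes f :: "real \<Rightarrow> complex" and C a :: real
  assumes "C \<ge> 0" and "a > 0"
    and "integrable lborel f"
    and "\<And>\<xi>. norm (f \<xi>) \<le> C * exp (- a * \<bar>\<xi>\<bar>)"
  shows "\<forall>\<xi>::real. norm (exp2conv f \<xi>)
           \<le> C * exp (- a * \<bar>\<xi>\<bar>) * (kummerM ((1 + a * \<bar>\<xi>\<bar>) / 2) 2 (C / (pi * a)) - 1)"
proof
  fix x :: real
  define T where "T = kummer_term ((1 + a * \<bar>x\<bar>) / 2) 2 (C / (pi * a))"
  have T0: "T 0 = 1" by (simp add: T_def kummer_term_def)
  have "summable T"
    unfolding T_def using assms(1,2) by (intro kummer_summable) (auto intro: add_pos_nonneg)
  moreover have "norm (convpow f (k + 2) x / of_nat (fact (k + 2))) \<le> C * exp (- a * \<bar>x\<bar>) * T (Suc k)"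
    for k unfolding T_def by (rule convpow_term_bound[OF assms(2,1,4)])
  ultimately have "norm (exp2conv f x) \<le> C * exp (- a * \<bar>x\<bar>) * (suminf T - T 0)"
    unfolding exp2conv_def by (intro norm_suminf_le_shifted)
  then show "norm (exp2conv f x) \<le> C * exp (- a * \<bar>x\<bar>) * (kummerM ((1 + a * \<bar>x\<bar>) / 2) 2 (C / (pi * a)) - 1)"
    using T0 by (simp add: T_def kummerM_eq_suminf)
qed

end
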